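(* Let $X$ be a smooth complex algebraic variety with local coordinates $x_1,\dots,x_n$, $f_1,\dots,f_r\in\mathcal{O}_X(X)$, $g=\sum_{i=1}^r y_if_i$ on $X\times\mathbf A^r_y$, and $\mathcal{M}$ a left $\mathcal{D}_X$-module (underlying a mixed Hodge module). Define $\varphi\colon\mathcal{M}_g\to\Gamma_+(\mathcal{M})$ as the unique $\mathcal{O}_X$-linear map with \[ \varphi(m\,y^\alpha\partial_\xi^j\delta_g)=(-1)^{|\alpha|+j}m\,\partial_t^\alpha\delta_f\quad(m\in\mathcal{M},\alpha\in\mathbf N^r,j\in\mathbf Z). \] Then: (1) $\varphi$ is $\mathcal{D}_X$-linear; (2) $\varphi\circ\partial_\xi^k=(-1)^k\varphi$ for all $k\in\mathbf Z$; (3) $\varphi\circ y_i=-\partial_{t_i}\circ\varphi$ for all $i$; (4) $\varphi\circ\partial_{y_i}=t_i\circ\varphi$ for all $i$; (5) $\varphi\circ\theta_y=s\circ\varphi$; (6) for every $\ell\in\mathbf Z$, $\varphi|_{E^{(\ell)}}$ is an isomorphism onto $\Gamma_+(\mathcal{M})$ and satisfies $\varphi\circ s=(s-\ell)\circ\varphi$.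
   Context: $\Gamma_+(\mathcal{M})=\bigoplus_{\alpha\in\mathbf N^r}\mathcal{M}\partial_t^\alpha\delta_f$ is the pushforward along the graph $X\to X\times\mathbf A^r_t$ of $(f_1,\dots,f_r)$, with $h(m\partial_t^\alpha\delta_f)=hm\partial_t^\alpha\delta_f$, $\partial_{x_i}(m\partial_t^\alpha\delta_f)=\partial_{x_i}(m)\partial_t^\alpha\delta_f-\sum_j\partial_{x_i}(f_j)m\partial_t^{\alpha+e_j}\delta_f$, $t_i(m\partial_t^\alpha\delta_f)=f_im\partial_t^\alpha\delta_f-\alpha_im\partial_t^{\alpha-e_i}\delta_f$, $\partial_{t_i}(m\partial_t^\alpha\delta_f)=m\partial_t^{\alpha+e_i}\delta_f$; on it $s=-\sum_i\partial_{t_i}t_i$. $\mathcal{M}_g=\mathcal{M}[y_1,\dots,y_r,\partial_\xi^{\pm1}]\delta_g$ is the partial microlocalization of the graph pushforward of $\mathcal{M}[y_1,\dots,y_r]$ along $g$ into $X\times\mathbf A^r_y\times\mathbf A^1_\xi$, with actions: $h\in\mathcal{O}_X$ by multiplication on $m$; $\partial_{x_i}(my^\alpha\partial_\xi^j\delta_g)=\partial_{x_i}(m)y^\alpha\partial_\xi^j\delta_g-\big(\sum_\ell\partial_{x_i}(f_\ell)my^{\alpha+e_\ell}\big)\partial_\xi^{j+1}\delta_g$; $y_i$ by multiplication; $\partial_{y_i}(my^\alpha\partial_\xi^j\delta_g)=\alpha_imy^{\alpha-e_i}\partial_\xi^j\delta_g-f_imy^\alpha\partial_\xi^{j+1}\delta_g$;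 $\partial_\xi(my^\alpha\partial_\xi^j\delta_g)=my^\alpha\partial_\xi^{j+1}\delta_g$; $\xi(my^\alpha\partial_\xi^j\delta_g)=gmy^\alpha\partial_\xi^j\delta_g-jmy^\alpha\partial_\xi^{j-1}\delta_g$. On it $s=-\partial_\xi\xi$ and $\theta_y=\sum_iy_i\partial_{y_i}$. For $\ell\in\mathbf Z$, $E^{(\ell)}=\ker(\theta_y-s-\ell)=\bigoplus_{|\alpha|=j+\ell}\mathcal{M}y^\alpha\partial_\xi^j\delta_g$, so $\mathcal{M}_g=\bigoplus_\ell E^{(\ell)}$. *)

theory Defs
  imports Main "HOL-Library.Function_Algebras"
begin

text \<open>The ring of functions O_X is a commutative
ring 'r with commuting derivations dO i (i < n) standing for the coordinate vector fields
d/dx_i; the left D_X-module M is an abelian group 'm with an O_X-action sm and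
commuting operators dM i satisfying the Leibniz rule.\<close>

definition Dmod :: "nat \<Rightarrow> ('r::comm_ring_1 \<Rightarrow> 'm::ab_group_add \<Rightarrow> 'm)
     \<Rightarrow> (nat \<Rightarrow> 'r \<Rightarrow> 'r) \<Rightarrow> (nat \<Rightarrow> 'm \<Rightarrow> 'm) \<Rightarrow> bool" where
  "Dmod n sm dO dM \<longleftrightarrow>
     (\<forall>m. sm 1 m = m) \<and>
     (\<forall>a b m. sm (a * b) m = sm a (sm b m)) \<and>
     (\<forall>a b m. sm (a + b) m = sm a m + sm b m) \<and>
     (\<forall>a m m'. sm a (m + m') = sm a m + sm a m') \<and>
     (\<forall>i<n. \<forall>a b. dO i (a + b) = dO i a + dO i b) \<and>
     (\<forall>i<n. \<forall>a b. dO i (a * b) = dO i a * b + a * dO i b) \<and>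
     (\<forall>i<n. \<forall>j<n. \<forall>a. dO i (dO j a) = dO j (dO i a)) \<and>
     (\<forall>i<n. \<forall>m m'. dM i (m + m') = dM i m + dM i m') \<and>
     (\<forall>i<n. \<forall>a m. dM i (sm a m) = sm (dO i a) m + sm a (dM i m)) \<and>
     (\<forall>i<n. \<forall>j<n. \<forall>m. dM i (dM j m) = dM j (dM i m))"

text \<open>Finitely supported sums.  An element of a direct sum indexed by 'i is a function
'i \<Rightarrow> 'm with finite support; mono_el a m is the element m placed at index a.\<close>

definition fsupp :: "('i \<Rightarrow> 'm::zero) \<Rightarrow> 'i set" where
  "fsupp F = {a. F a \<noteq> 0}"

definition mono_el :: "'i \<Rightarrow> 'm \<Rightarrow> 'i \<Rightarrow> 'm::zero" where
  "mono_el a m = (\<lambda>b. if b = a then m else 0)"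

definition lin_ext :: "('i \<Rightarrow> 'm::zero \<Rightarrow> 'k \<Rightarrow> 'n::comm_monoid_add) \<Rightarrow> ('i \<Rightarrow> 'm) \<Rightarrow> 'k \<Rightarrow> 'n" where
  "lin_ext op F = (\<Sum>a\<in>fsupp F. op a (F a))"

text \<open>Multi-indices alpha in N^r are functions nat \<Rightarrow> nat vanishing from r on.\<close>
definition multi_idx :: "nat \<Rightarrow> (nat \<Rightarrow> nat) set" where
  "multi_idx r = {\<alpha>. \<forall>i\<ge>r. \<alpha> i = 0}"

definition msize :: "nat \<Rightarrow> (nat \<Rightarrow> nat) \<Rightarrow> nat" where
  "msize r \<alpha> = (\<Sum>i<r. \<alpha> i)"

definition incr :: "(nat \<Rightarrow> nat) \<Rightarrow> nat \<Rightarrow> nat \<Rightarrow> nat" where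
  "incr \<alpha> i = \<alpha>(i := \<alpha> i + 1)"

definition decr :: "(nat \<Rightarrow> nat) \<Rightarrow> nat \<Rightarrow> nat \<Rightarrow> nat" where
  "decr \<alpha> i = \<alpha>(i := \<alpha> i - 1)"

section \<open>Gamma_+(M) = direct sum over alpha of M d_t^alpha delta_f\<close>

definition Gam :: "nat \<Rightarrow> ((nat \<Rightarrow> nat) \<Rightarrow> 'm::zero) set" where
  "Gam r = {G. finite (fsupp G) \<and> fsupp G \<subseteq> multi_idx r}"

definition gam_h :: "('r \<Rightarrow> 'm \<Rightarrow> 'm::ab_group_add) \<Rightarrow> 'r \<Rightarrow> ((nat \<Rightarrow> nat) \<Rightarrow> 'm) \<Rightarrow> (nat \<Rightarrow> nat) \<Rightarrow> 'm" where
  "gam_h sm h = lin_ext (\<lambda>\<alpha> m. mono_el \<alpha> (sm h m))"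

definition gam_dx :: "('r \<Rightarrow> 'm \<Rightarrow> 'm::ab_group_add) \<Rightarrow> (nat \<Rightarrow> 'r \<Rightarrow> 'r) \<Rightarrow> (nat \<Rightarrow> 'm \<Rightarrow> 'm)
    \<Rightarrow> (nat \<Rightarrow> 'r) \<Rightarrow> nat \<Rightarrow> nat \<Rightarrow> ((nat \<Rightarrow> nat) \<Rightarrow> 'm) \<Rightarrow> (nat \<Rightarrow> nat) \<Rightarrow> 'm" where
  "gam_dx sm dO dM f r i = lin_ext (\<lambda>\<alpha> m.
      mono_el \<alpha> (dM i m) - (\<Sum>j<r. mono_el (incr \<alpha> j) (sm (dO i (f j)) m)))"

definition gam_t :: "('r::comm_ring_1 \<Rightarrow> 'm \<Rightarrow> 'm::ab_group_add) \<Rightarrow> (nat \<Rightarrow> 'r) \<Rightarrow> nat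
    \<Rightarrow> ((nat \<Rightarrow> nat) \<Rightarrow> 'm) \<Rightarrow> (nat \<Rightarrow> nat) \<Rightarrow> 'm" where
  "gam_t sm f i = lin_ext (\<lambda>\<alpha> m.
      mono_el \<alpha> (sm (f i) m) - mono_el (decr \<alpha> i) (sm (of_nat (\<alpha> i)) m))"

definition gam_dt :: "nat \<Rightarrow> ((nat \<Rightarrow> nat) \<Rightarrow> 'm::ab_group_add) \<Rightarrow> (nat \<Rightarrow> nat) \<Rightarrow> 'm" where
  "gam_dt i = lin_ext (\<lambda>\<alpha> m. mono_el (incr \<alpha> i) m)"

definition gam_s :: "('r::comm_ring_1 \<Rightarrow> 'm \<Rightarrow> 'm::ab_group_add) \<Rightarrow> (nat \<Rightarrow> 'r) \<Rightarrow> nat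
    \<Rightarrow> ((nat \<Rightarrow> nat) \<Rightarrow> 'm) \<Rightarrow> (nat \<Rightarrow> nat) \<Rightarrow> 'm" where
  "gam_s sm f r G = - (\<Sum>i<r. gam_dt i (gam_t sm f i G))"

section \<open>M_g = direct sum over (alpha, j) in N^r x Z of M y^alpha d_xi^j delta_g\<close>

definition Mg :: "nat \<Rightarrow> ((nat \<Rightarrow> nat) \<times> int \<Rightarrow> 'm::zero) set" where
  "Mg r = {F. finite (fsupp F) \<and> fst ` fsupp F \<subseteq> multi_idx r}"

definition mg_h :: "('r \<Rightarrow> 'm \<Rightarrow> 'm::ab_group_add) \<Rightarrow> 'r \<Rightarrow> ((nat \<Rightarrow> nat) \<times> int \<Rightarrow> 'm) \<Rightarrow> (nat \<Rightarrow> nat) \<times> int \<Rightarrow> 'm" where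
  "mg_h sm h = lin_ext (\<lambda>a m. mono_el a (sm h m))"

definition mg_dx :: "('r \<Rightarrow> 'm \<Rightarrow> 'm::ab_group_add) \<Rightarrow> (nat \<Rightarrow> 'r \<Rightarrow> 'r) \<Rightarrow> (nat \<Rightarrow> 'm \<Rightarrow> 'm)
    \<Rightarrow> (nat \<Rightarrow> 'r) \<Rightarrow> nat \<Rightarrow> nat \<Rightarrow> ((nat \<Rightarrow> nat) \<times> int \<Rightarrow> 'm) \<Rightarrow> (nat \<Rightarrow> nat) \<times> int \<Rightarrow> 'm" where
  "mg_dx sm dO dM f r i = lin_ext (\<lambda>(\<alpha>, j) m.
      mono_el (\<alpha>, j) (dM i m) - (\<Sum>l<r. mono_el (incr \<alpha> l, j + 1) (sm (dO i (f l)) m)))"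

definition mg_y :: "nat \<Rightarrow> ((nat \<Rightarrow> nat) \<times> int \<Rightarrow> 'm::ab_group_add) \<Rightarrow> (nat \<Rightarrow> nat) \<times> int \<Rightarrow> 'm" where
  "mg_y i = lin_ext (\<lambda>(\<alpha>, j) m. mono_el (incr \<alpha> i, j) m)"

definition mg_dy :: "('r::comm_ring_1 \<Rightarrow> 'm \<Rightarrow> 'm::ab_group_add) \<Rightarrow> (nat \<Rightarrow> 'r) \<Rightarrow> nat
    \<Rightarrow> ((nat \<Rightarrow> nat) \<times> int \<Rightarrow> 'm) \<Rightarrow> (nat \<Rightarrow> nat) \<times> int \<Rightarrow> 'm" where
  "mg_dy sm f i = lin_ext (\<lambda>(\<alpha>, j) m.
      mono_el (decr \<alpha> i, j) (sm (of_nat (\<alpha> i)) m) - mono_el (\<alpha>, j + 1) (sm (f i) m))"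

definition mg_dxi :: "((nat \<Rightarrow> nat) \<times> int \<Rightarrow> 'm::ab_group_add) \<Rightarrow> (nat \<Rightarrow> nat) \<times> int \<Rightarrow> 'm" where
  "mg_dxi = lin_ext (\<lambda>(\<alpha>, j) m. mono_el (\<alpha>, j + 1) m)"

text \<open>The inverse of d_xi (it exists on the microlocalization).\<close>
definition mg_dxi_inv :: "((nat \<Rightarrow> nat) \<times> int \<Rightarrow> 'm::ab_group_add) \<Rightarrow> (nat \<Rightarrow> nat) \<times> int \<Rightarrow> 'm" where
  "mg_dxi_inv = lin_ext (\<lambda>(\<alpha>, j) m. mono_el (\<alpha>, j - 1) m)"

definition mg_dxi_pow :: "int \<Rightarrow> ((nat \<Rightarrow> nat) \<times> int \<Rightarrow> 'm::ab_group_add) \<Rightarrow> (nat \<Rightarrow> nat) \<times> int \<Rightarrow> 'm" where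
  "mg_dxi_pow k = (if 0 \<le> k then mg_dxi ^^ nat k else mg_dxi_inv ^^ nat (- k))"

definition mg_xi :: "('r::comm_ring_1 \<Rightarrow> 'm \<Rightarrow> 'm::ab_group_add) \<Rightarrow> (nat \<Rightarrow> 'r) \<Rightarrow> nat
    \<Rightarrow> ((nat \<Rightarrow> nat) \<times> int \<Rightarrow> 'm) \<Rightarrow> (nat \<Rightarrow> nat) \<times> int \<Rightarrow> 'm" where
  "mg_xi sm f r = lin_ext (\<lambda>(\<alpha>, j) m.
      (\<Sum>l<r. mono_el (incr \<alpha> l, j) (sm (f l) m)) - mono_el (\<alpha>, j - 1) (sm (of_int j) m))"

definition mg_s :: "('r::comm_ring_1 \<Rightarrow> 'm \<Rightarrow> 'm::ab_group_add) \<Rightarrow> (nat \<Rightarrow> 'r) \<Rightarrow> nat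
    \<Rightarrow> ((nat \<Rightarrow> nat) \<times> int \<Rightarrow> 'm) \<Rightarrow> (nat \<Rightarrow> nat) \<times> int \<Rightarrow> 'm" where
  "mg_s sm f r F = - mg_dxi (mg_xi sm f r F)"

definition mg_theta :: "('r::comm_ring_1 \<Rightarrow> 'm \<Rightarrow> 'm::ab_group_add) \<Rightarrow> (nat \<Rightarrow> 'r) \<Rightarrow> nat
    \<Rightarrow> ((nat \<Rightarrow> nat) \<times> int \<Rightarrow> 'm) \<Rightarrow> (nat \<Rightarrow> nat) \<times> int \<Rightarrow> 'm" where
  "mg_theta sm f r F = (\<Sum>i<r. mg_y i (mg_dy sm f i F))"

definition Eell :: "nat \<Rightarrow> int \<Rightarrow> ((nat \<Rightarrow> nat) \<times> int \<Rightarrow> 'm::zero) set" where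
  "Eell r l = {F \<in> Mg r. \<forall>(\<alpha>, j) \<in> fsupp F. int (msize r \<alpha>) = j + l}"

definition phi :: "nat \<Rightarrow> ((nat \<Rightarrow> nat) \<times> int \<Rightarrow> 'm::ab_group_add) \<Rightarrow> (nat \<Rightarrow> nat) \<Rightarrow> 'm" where
  "phi r = lin_ext (\<lambda>(\<alpha>, j) m.
      mono_el \<alpha> (if even (int (msize r \<alpha>) + j) then m else - m))"

end

theory Submission
  imports Defs "HOL.Modules"
begin

text \<open>
  Both \<open>M_g\<close> and \<open>\<Gamma>_+(M)\<close> are direct sums of copies of \<open>M\<close> indexed by
  monomials, and \<open>\<phi>\<close> as well as every operator in the statement is the additive extension
  of its values on single monomials. So each identity only has to be checked on one monomial
  \<open>m y^\<alpha> \<partial>_\<xi>^j \<delta>_g\<close>, where it is a comparison of signs \<open>(-1)^(|\<alpha>|+j)\<close>: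
  multiplying by \<open>y_i\<close> or \<open>\<partial>_\<xi>^(\<plusminus>1)\<close> changes \<open>|\<alpha>| + j\<close> by one, while
  \<open>\<partial>_x_i\<close> raises both \<open>|\<alpha>|\<close> and \<open>j\<close>. On \<open>E^(\<ell>)\<close> the exponent
  \<open>j = |\<alpha>| - \<ell>\<close> is determined by \<open>\<alpha>\<close>, so there \<open>\<phi>\<close> is \<open>(-1)^\<ell>\<close> times the
  identification of coefficients, and the term \<open>-j \<partial>_\<xi>^(j-1)\<close> of \<open>\<xi>\<close> contributes the
  factor \<open>|\<alpha>| - \<ell>\<close> that turns \<open>s\<close> into \<open>s - \<ell>\<close>.
\<close>

section \<open>Additive extension from monomials\<close>

lemma finite_fsupp_zero [simp]: "finite (fsupp (0 :: 'i \<Rightarrow> 'm::zero))"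
  by (simp add: fsupp_def)

lemma finite_fsupp_add [simp]:
  "finite (fsupp F) \<Longrightarrow> finite (fsupp G) \<Longrightarrow> finite (fsupp (F + G :: 'i \<Rightarrow> 'm::monoid_add))"
  by (rule finite_subset[of _ "fsupp F \<union> fsupp G"]) (auto simp: fsupp_def)

lemma fsupp_uminus [simp]: "fsupp (- F :: 'i \<Rightarrow> 'm::group_add) = fsupp F"
  by (simp add: fsupp_def)

lemma finite_fsupp_diff [simp]:
  "finite (fsupp F) \<Longrightarrow> finite (fsupp G) \<Longrightarrow> finite (fsupp (F - G :: 'i \<Rightarrow> 'm::group_add))"
  using finite_fsupp_add[of F "- G"] by simp

lemma finite_fsupp_sum [simp]:
  "(\<And>x. x \<in> A \<Longrightarrow> finite (fsupp (H x))) \<Longrightarrow>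
    finite (fsupp (\<Sum>x\<in>A. H x :: 'i \<Rightarrow> 'm::comm_monoid_add))"
  by (induction A rule: infinite_finite_induct) auto

lemma finite_fsupp_mono_el [simp]: "finite (fsupp (mono_el a m))"
  by (rule finite_subset[of _ "{a}"]) (auto simp: fsupp_def mono_el_def)

lemma additive_mono_el: "additive (mono_el a :: 'm::ab_group_add \<Rightarrow> 'i \<Rightarrow> 'm)"
  by unfold_locales (auto simp: mono_el_def)

lemmas mono_el_zero [simp] = additive.zero[OF additive_mono_el]
  and mono_el_add = additive.add[OF additive_mono_el]
  and mono_el_minus = additive.minus[OF additive_mono_el]
  and mono_el_diff = additive.diff[OF additive_mono_el]
  and mono_el_sum = additive.sum[OF additive_mono_el]

lemma finite_fsupp_lin_ext [simp]:
  "(\<And>a m. finite (fsupp (op a m))) \<Longrightarrow> finite (fsupp (lin_ext op F))"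
  unfolding lin_ext_def by simp

lemma lin_ext_cong_fsupp:
  "(\<And>a. a \<in> fsupp F \<Longrightarrow> op a (F a) = op' a (F a)) \<Longrightarrow> lin_ext op F = lin_ext op' F"
  unfolding lin_ext_def by (rule sum.cong) auto

lemma lin_ext_eq_sum_superset:
  assumes "finite S" "fsupp F \<subseteq> S" "\<And>a. op a 0 = 0"
  shows "lin_ext op F = (\<Sum>a\<in>S. op a (F a))"
  unfolding lin_ext_def
  by (rule sum.mono_neutral_left) (use assms in \<open>auto simp: fsupp_def\<close>)

lemma lin_ext_mono_el:
  assumes "op a 0 = 0"
  shows "lin_ext op (mono_el a m) = op a m"
proof -
  have "lin_ext op (mono_el a m) = (\<Sum>b\<in>fsupp (mono_el a m). op b (mono_el a m b))"
    by (simp add: lin_ext_def)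
  also have "\<dots> = op a m"
    using assms by (cases "m = 0") (auto simp: fsupp_def mono_el_def)
  finally show ?thesis .
qed

text \<open>\<^const>\<open>lin_ext\<close> sums over the support, so it is \<open>0\<close> on infinitely supported arguments
  and additive only on finitely supported ones.\<close>

definition fsupp_additive :: "(('i \<Rightarrow> 'm::monoid_add) \<Rightarrow> 'n::monoid_add) \<Rightarrow> bool" where
  "fsupp_additive P \<longleftrightarrow>
     (\<forall>F G. finite (fsupp F) \<longrightarrow> finite (fsupp G) \<longrightarrow> P (F + G) = P F + P G)"

lemma fsupp_additiveD:
  "fsupp_additive P \<Longrightarrow> finite (fsupp F) \<Longrightarrow> finite (fsupp G) \<Longrightarrow> P (F + G) = P F + P G"
  by (simp add: fsupp_additive_def)

lemma fsupp_additive_zero: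
  assumes "fsupp_additive (P :: ('i \<Rightarrow> 'm::monoid_add) \<Rightarrow> 'n::ab_group_add)"
  shows "P 0 = 0"
  using fsupp_additiveD[OF assms, of 0 0] by simp

lemma fsupp_additive_minus:
  assumes "fsupp_additive (P :: ('i \<Rightarrow> 'm::group_add) \<Rightarrow> 'n::ab_group_add)" "finite (fsupp F)"
  shows "P (- F) = - P F"
  using fsupp_additiveD[OF assms(1), of F "- F"] assms fsupp_additive_zero[OF assms(1)]
  by (simp add: eq_neg_iff_add_eq_0 add.commute)

lemma fsupp_additive_diff:
  assumes "fsupp_additive (P :: ('i \<Rightarrow> 'm::group_add) \<Rightarrow> 'n::ab_group_add)"
    "finite (fsupp F)" "finite (fsupp G)"
  shows "P (F - G) = P F - P G"
  using fsupp_additiveD[OF assms(1), of F "- G"] fsupp_additive_minus[OF assms(1), of G] assms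
  by simp

lemma fsupp_additive_sum:
  assumes "fsupp_additive (P :: ('i \<Rightarrow> 'm::comm_monoid_add) \<Rightarrow> 'n::ab_group_add)"
    "\<And>x. x \<in> A \<Longrightarrow> finite (fsupp (H x))"
  shows "P (\<Sum>x\<in>A. H x) = (\<Sum>x\<in>A. P (H x))"
  using assms(2)
  by (induction A rule: infinite_finite_induct)
    (simp_all add: fsupp_additive_zero[OF assms(1)] fsupp_additiveD[OF assms(1)])

lemma fsupp_additive_uminus_fun:
  "fsupp_additive P \<Longrightarrow> fsupp_additive (\<lambda>G. - P G :: 'n::ab_group_add)"
  by (simp add: fsupp_additive_def)

lemma fsupp_additive_diff_fun:
  "fsupp_additive P \<Longrightarrow> fsupp_additive Q \<Longrightarrow> fsupp_additive (\<lambda>G. P G - Q G :: 'n::ab_group_add)"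
  by (simp add: fsupp_additive_def)

lemma fsupp_additive_lin_ext:
  assumes "\<And>a. additive (op a)"
  shows "fsupp_additive (lin_ext op)"
  unfolding fsupp_additive_def
proof (intro allI impI)
  fix F G :: "'a \<Rightarrow> 'b" assume "finite (fsupp F)" "finite (fsupp G)"
  then have S: "finite (fsupp F \<union> fsupp G)" by simp
  have zero: "\<And>a. op a 0 = 0" using additive.zero[OF assms] .
  have "lin_ext op (F + G) = (\<Sum>a\<in>fsupp F \<union> fsupp G. op a (F a + G a))"
    by (subst lin_ext_eq_sum_superset[OF S]) (auto simp: fsupp_def zero)
  also have "\<dots> = (\<Sum>a\<in>fsupp F \<union> fsupp G. op a (F a)) + (\<Sum>a\<in>fsupp F \<union> fsupp G. op a (G a))"
    by (simp add: additive.add[OF assms] sum.distrib)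
  also have "\<dots> = lin_ext op F + lin_ext op G"
    using S zero by (simp add: lin_ext_eq_sum_superset[of "fsupp F \<union> fsupp G"])
  finally show "lin_ext op (F + G) = lin_ext op F + lin_ext op G" .
qed

lemma fsupp_additive_lin_ext_commute:
  assumes "fsupp_additive (P :: ('i \<Rightarrow> 'm::comm_monoid_add) \<Rightarrow> 'k \<Rightarrow> 'n::ab_group_add)"
    and "\<And>a m. finite (fsupp (op a m))"
  shows "P (lin_ext op F) = lin_ext (\<lambda>a m. P (op a m)) F"
  using assms
  by (cases "finite (fsupp F)")
    (simp_all add: lin_ext_def fsupp_additive_sum[OF assms(1)] fsupp_additive_zero[OF assms(1)])

section \<open>The map \<open>\<phi>\<close>\<close>

definition alt_sign :: "int \<Rightarrow> 'm::group_add \<Rightarrow> 'm" where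
  "alt_sign k m = (if even k then m else - m)"

lemma alt_sign_plus_one [simp]: "alt_sign (k + 1) m = - alt_sign k m"
  by (simp add: alt_sign_def)

lemma alt_sign_zero [simp]: "alt_sign k 0 = 0"
  by (simp add: alt_sign_def)

lemma alt_sign_eq_0_iff [simp]: "alt_sign k m = 0 \<longleftrightarrow> m = 0"
  by (simp add: alt_sign_def)

lemma alt_sign_alt_sign [simp]: "alt_sign k (alt_sign k m) = m"
  by (simp add: alt_sign_def)

lemma msize_incr: "i < r \<Longrightarrow> msize r (incr \<alpha> i) = Suc (msize r \<alpha>)"
  unfolding msize_def incr_def by (simp add: sum.remove[of "{..<r}" i])

lemma incr_decr: "0 < \<alpha> i \<Longrightarrow> incr (decr \<alpha> i) i = \<alpha>"
  by (auto simp: incr_def decr_def)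

lemma msize_decr: "i < r \<Longrightarrow> 0 < \<alpha> i \<Longrightarrow> msize r \<alpha> = Suc (msize r (decr \<alpha> i))"
  using msize_incr[of i r "decr \<alpha> i"] by (simp add: incr_decr)

lemma phi_eq_lin_ext_alt_sign:
  "phi r = lin_ext (\<lambda>(\<alpha>, j) m. mono_el \<alpha> (alt_sign (int (msize r \<alpha>) + j) m))"
  by (simp add: phi_def alt_sign_def)

lemma phi_mono_el [simp]: "phi r (mono_el (\<alpha>, j) m) = mono_el \<alpha> (alt_sign (int (msize r \<alpha>) + j) m)"
  unfolding phi_eq_lin_ext_alt_sign by (subst lin_ext_mono_el) simp_all

lemma phi_eq_lin_ext_phi_mono_el: "phi r F = lin_ext (\<lambda>a m. phi r (mono_el a m)) F"
  unfolding phi_eq_lin_ext_alt_sign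
  by (rule lin_ext_cong_fsupp) (auto simp flip: phi_eq_lin_ext_alt_sign)

lemma fsupp_additive_phi: "fsupp_additive (phi r)"
  unfolding phi_eq_lin_ext_alt_sign
  by (rule fsupp_additive_lin_ext) (auto simp: additive_def mono_el_def alt_sign_def)

lemma finite_fsupp_phi [simp]: "finite (fsupp (phi r F))"
  unfolding phi_def by (simp split: prod.split)

lemmas phi_zero [simp] = fsupp_additive_zero[OF fsupp_additive_phi]
  and phi_minus = fsupp_additive_minus[OF fsupp_additive_phi]
  and phi_diff = fsupp_additive_diff[OF fsupp_additive_phi]
  and phi_sum = fsupp_additive_sum[OF fsupp_additive_phi]

lemma phi_intertwine:
  assumes "fsupp_additive Q" "\<And>a m. finite (fsupp (op a m))"
    and "\<And>a. a \<in> fsupp F \<Longrightarrow> phi r (op a (F a)) = Q (phi r (mono_el a (F a)))"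
  shows "phi r (lin_ext op F) = Q (phi r F)"
proof -
  have "phi r (lin_ext op F) = lin_ext (\<lambda>a m. phi r (op a m)) F"
    by (rule fsupp_additive_lin_ext_commute[OF fsupp_additive_phi assms(2)])
  also have "\<dots> = lin_ext (\<lambda>a m. Q (phi r (mono_el a m))) F"
    by (rule lin_ext_cong_fsupp) (rule assms(3))
  also have "\<dots> = Q (lin_ext (\<lambda>a m. phi r (mono_el a m)) F)"
    by (rule fsupp_additive_lin_ext_commute[OF assms(1), symmetric]) simp
  finally show ?thesis by (simp flip: phi_eq_lin_ext_phi_mono_el)
qed

lemma phi_apply_Eell:
  assumes F: "F \<in> Eell r l"
  shows "phi r F \<alpha> = alt_sign l (F (\<alpha>, int (msize r \<alpha>) - l))"
proof -
  define a where "a = (\<alpha>, int (msize r \<alpha>) - l)"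
  have fin: "finite (fsupp F)" using F by (simp add: Eell_def Mg_def)
  interpret eval: additive "\<lambda>G :: (nat \<Rightarrow> nat) \<Rightarrow> 'a. G \<alpha>" by unfold_locales simp
  have "phi r F \<alpha> = (\<Sum>b\<in>fsupp F. phi r (mono_el b (F b)) \<alpha>)"
    by (simp add: phi_eq_lin_ext_phi_mono_el[of r F] lin_ext_def eval.sum)
  also have "\<dots> = (\<Sum>b\<in>fsupp F. if b = a then alt_sign l (F b) else 0)"
  proof (rule sum.cong)
    fix b assume b: "b \<in> fsupp F"
    obtain \<beta> j where \<beta>: "b = (\<beta>, j)" by (cases b)
    have j: "j = int (msize r \<beta>) - l" using F b \<beta> by (auto simp: Eell_def)
    then have "even (int (msize r \<beta>) + j) = even l" by simp
    then have sign: "alt_sign (int (msize r \<beta>) + j) = alt_sign l"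
      by (simp add: alt_sign_def fun_eq_iff)
    show "phi r (mono_el b (F b)) \<alpha> = (if b = a then alt_sign l (F b) else 0)"
      unfolding \<beta> phi_mono_el sign using j by (auto simp: a_def mono_el_def)
  qed simp
  also have "\<dots> = alt_sign l (F a)"
    by (subst sum.delta[OF fin]) (simp add: fsupp_def)
  finally show ?thesis by (simp add: a_def)
qed

definition phi_inv_Eell ::
    "nat \<Rightarrow> int \<Rightarrow> ((nat \<Rightarrow> nat) \<Rightarrow> 'm::ab_group_add) \<Rightarrow> (nat \<Rightarrow> nat) \<times> int \<Rightarrow> 'm" where
  "phi_inv_Eell r l G = (\<lambda>(\<alpha>, j).
     if \<alpha> \<in> multi_idx r \<and> j = int (msize r \<alpha>) - l then alt_sign l (G \<alpha>) else 0)"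

lemma phi_inv_Eell_in_Eell: "G \<in> Gam r \<Longrightarrow> phi_inv_Eell r l G \<in> Eell r l"
proof -
  assume G: "G \<in> Gam r"
  have "fsupp (phi_inv_Eell r l G) \<subseteq> (\<lambda>\<alpha>. (\<alpha>, int (msize r \<alpha>) - l)) ` fsupp G"
    by (auto simp: fsupp_def phi_inv_Eell_def alt_sign_def split: if_splits)
  moreover have "finite (fsupp G)" using G by (simp add: Gam_def)
  ultimately have "finite (fsupp (phi_inv_Eell r l G))" by (rule finite_surj[rotated])
  then show ?thesis
    by (auto simp: Eell_def Mg_def fsupp_def phi_inv_Eell_def split: if_splits)
qed

lemma bij_betw_phi_Eell: "bij_betw (phi r :: _ \<Rightarrow> _ \<Rightarrow> 'm::ab_group_add) (Eell r l) (Gam r)"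
proof (rule bij_betw_byWitness[where f' = "phi_inv_Eell r l"])
  have supp: "\<alpha> \<in> multi_idx r \<and> j = int (msize r \<alpha>) - l"
    if "F \<in> Eell r l" "(\<alpha>, j) \<in> fsupp F" for F :: "_ \<Rightarrow> 'm" and \<alpha> j
    using that by (force simp: Eell_def Mg_def)
  show "\<forall>F\<in>Eell r l. phi_inv_Eell r l (phi r F) = (F :: _ \<Rightarrow> 'm)"
  proof (intro ballI ext)
    fix F :: "_ \<Rightarrow> 'm" and a :: "(nat \<Rightarrow> nat) \<times> int" assume F: "F \<in> Eell r l"
    obtain \<alpha> j where a: "a = (\<alpha>, j)" by (cases a)
    show "phi_inv_Eell r l (phi r F) a = F a"
      using supp[OF F, of \<alpha> j]
      by (auto simp: a phi_inv_Eell_def phi_apply_Eell[OF F] fsupp_def)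
  qed
  show "\<forall>G\<in>Gam r. phi r (phi_inv_Eell r l G) = (G :: _ \<Rightarrow> 'm)"
  proof (intro ballI ext)
    fix G :: "_ \<Rightarrow> 'm" and \<alpha> assume G: "G \<in> Gam r"
    then have "\<alpha> \<notin> multi_idx r \<Longrightarrow> G \<alpha> = 0" by (auto simp: Gam_def fsupp_def)
    then show "phi r (phi_inv_Eell r l G) \<alpha> = G \<alpha>"
      unfolding phi_apply_Eell[OF phi_inv_Eell_in_Eell[OF G]] by (auto simp: phi_inv_Eell_def)
  qed
  show "phi r ` Eell r l \<subseteq> (Gam r :: (_ \<Rightarrow> 'm) set)"
  proof (intro image_subsetI)
    fix F :: "_ \<Rightarrow> 'm" assume F: "F \<in> Eell r l"
    then show "phi r F \<in> Gam r"
      using supp[OF F] finite_fsupp_phi[of r F]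
      unfolding Gam_def fsupp_def phi_apply_Eell[OF F] by auto
  qed
  show "phi_inv_Eell r l ` Gam r \<subseteq> (Eell r l :: (_ \<Rightarrow> 'm) set)"
    using phi_inv_Eell_in_Eell by blast
qed

section \<open>Compatibility of \<open>\<phi>\<close> with the operators\<close>

lemma fsupp_additive_gam_dt: "fsupp_additive (gam_dt i)"
  unfolding gam_dt_def by (rule fsupp_additive_lin_ext) (simp add: additive_def mono_el_add)

lemma gam_dt_mono_el [simp]: "gam_dt i (mono_el \<alpha> m) = mono_el (incr \<alpha> i) m"
  unfolding gam_dt_def by (rule lin_ext_mono_el) simp

lemma finite_fsupp_mg_dxi [simp]: "finite (fsupp (mg_dxi F))"
  unfolding mg_dxi_def by (simp split: prod.split)

lemma phi_mg_dxi: "phi r (mg_dxi F) = - phi r F"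
  unfolding mg_dxi_def
  by (rule phi_intertwine[where Q = uminus])
    (auto simp: fsupp_additive_def alt_sign_def mono_el_minus split: prod.split)

lemma phi_mg_dxi_inv: "phi r (mg_dxi_inv F) = - phi r F"
  unfolding mg_dxi_inv_def
  by (rule phi_intertwine[where Q = uminus])
    (auto simp: fsupp_additive_def alt_sign_def mono_el_minus split: prod.split)

lemma phi_mg_dxi_pow: "phi r (mg_dxi_pow k F) = alt_sign k (phi r F)"
proof -
  have "phi r ((mg_dxi ^^ n) F) = alt_sign (int n) (phi r F)"
    and "phi r ((mg_dxi_inv ^^ n) F) = alt_sign (- int n) (phi r F)" for n
    by (induction n) (simp_all add: phi_mg_dxi phi_mg_dxi_inv alt_sign_def)
  then show ?thesis by (simp add: mg_dxi_pow_def)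
qed

lemma phi_mg_y: "i < r \<Longrightarrow> phi r (mg_y i F) = - gam_dt i (phi r F)"
  unfolding mg_y_def
  by (rule phi_intertwine[where Q = "\<lambda>G. - gam_dt i G"])
    (auto simp: fsupp_additive_uminus_fun fsupp_additive_gam_dt alt_sign_def msize_incr
      mono_el_minus split: prod.split)

context module
begin

lemma scale_alt_sign [simp]: "a *s alt_sign k m = alt_sign k (a *s m)"
  by (simp add: alt_sign_def)

lemma fsupp_additive_gam_h: "fsupp_additive (gam_h scale h)"
  unfolding gam_h_def
  by (rule fsupp_additive_lin_ext) (simp add: additive_def mono_el_add scale_right_distrib)

lemma gam_h_mono_el [simp]: "gam_h scale h (mono_el \<alpha> m) = mono_el \<alpha> (h *s m)"
  unfolding gam_h_def by (rule lin_ext_mono_el) simp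

lemma phi_mg_h: "phi r (mg_h scale h F) = gam_h scale h (phi r F)"
  unfolding mg_h_def
  by (rule phi_intertwine[where Q = "gam_h scale h"])
    (auto simp: fsupp_additive_gam_h alt_sign_def mono_el_minus)

lemma fsupp_additive_gam_dx:
  "additive (dM i) \<Longrightarrow> fsupp_additive (gam_dx scale dO dM f r i)"
  unfolding gam_dx_def
  by (rule fsupp_additive_lin_ext)
    (simp add: additive_def additive.add mono_el_add scale_right_distrib sum.distrib)

lemma gam_dx_mono_el:
  "additive (dM i) \<Longrightarrow> gam_dx scale dO dM f r i (mono_el \<alpha> m) =
     mono_el \<alpha> (dM i m) - (\<Sum>l<r. mono_el (incr \<alpha> l) (dO i (f l) *s m))"
  unfolding gam_dx_def by (rule lin_ext_mono_el) (simp add: additive.zero)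

lemma phi_mg_dx:
  assumes "additive (dM i)"
  shows "phi r (mg_dx scale dO dM f r i F) = gam_dx scale dO dM f r i (phi r F)"
  unfolding mg_dx_def
  by (rule phi_intertwine[OF fsupp_additive_gam_dx[where dM = dM and i = i, OF assms]])
    (auto simp: gam_dx_mono_el[where dM = dM and i = i, OF assms] additive.minus[OF assms]
      phi_diff phi_sum msize_incr alt_sign_def split: prod.split)

lemma fsupp_additive_gam_t: "fsupp_additive (gam_t scale f i)"
  unfolding gam_t_def
  by (rule fsupp_additive_lin_ext) (simp add: additive_def mono_el_add scale_right_distrib)

lemma gam_t_mono_el [simp]:
  "gam_t scale f i (mono_el \<alpha> m) = mono_el \<alpha> (f i *s m) - mono_el (decr \<alpha> i) (of_nat (\<alpha> i) *s m)"
  unfolding gam_t_def by (rule lin_ext_mono_el) simp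

lemma finite_fsupp_gam_t [simp]: "finite (fsupp (gam_t scale f i G))"
  unfolding gam_t_def by simp

text \<open>Either \<open>\<alpha> i = 0\<close> and the coefficient vanishes, or \<^const>\<open>decr\<close> lowers \<open>|\<alpha>|\<close> by one.\<close>

lemma phi_mono_el_decr:
  assumes "i < r"
  shows "phi r (mono_el (decr \<alpha> i, j) (of_nat (\<alpha> i) *s m)) =
    - mono_el (decr \<alpha> i) (alt_sign (int (msize r \<alpha>) + j) (of_nat (\<alpha> i) *s m))"
proof (cases "\<alpha> i = 0")
  case False
  then have "int (msize r \<alpha>) + j = int (msize r (decr \<alpha> i)) + j + 1"
    using msize_decr[OF assms] by simp
  then show ?thesis by (simp only: phi_mono_el alt_sign_plus_one mono_el_minus minus_minus)
qed simp

lemma phi_mg_dy: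
  assumes "i < r"
  shows "phi r (mg_dy scale f i F) = gam_t scale f i (phi r F)"
  unfolding mg_dy_def
proof (rule phi_intertwine[OF fsupp_additive_gam_t])
  fix a :: "(nat \<Rightarrow> nat) \<times> int" and m :: 'b
  obtain \<alpha> j where a: "a = (\<alpha>, j)" by (cases a)
  have "phi r (mono_el (\<alpha>, j + 1) (f i *s m)) =
      - mono_el \<alpha> (alt_sign (int (msize r \<alpha>) + j) (f i *s m))"
    by (simp add: add.assoc[symmetric] mono_el_minus)
  then show "phi r ((\<lambda>(\<alpha>, j) m. mono_el (decr \<alpha> i, j) (of_nat (\<alpha> i) *s m) -
      mono_el (\<alpha>, j + 1) (f i *s m)) a m) = gam_t scale f i (phi r (mono_el a m))"
    by (simp del: phi_mono_el add: a phi_diff phi_mono_el_decr[OF assms] phi_mono_el[of r \<alpha> j])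
qed (simp split: prod.split)

lemma fsupp_additive_gam_s: "fsupp_additive (gam_s scale f r)"
  unfolding fsupp_additive_def gam_s_def
  by (simp add: fsupp_additiveD[OF fsupp_additive_gam_t] fsupp_additiveD[OF fsupp_additive_gam_dt]
      sum.distrib)

lemma gam_s_mono_el:
  "gam_s scale f r (mono_el \<alpha> m) =
     mono_el \<alpha> (of_nat (msize r \<alpha>) *s m) - (\<Sum>i<r. mono_el (incr \<alpha> i) (f i *s m))"
proof -
  have incr_decr_term:
    "mono_el (incr (decr \<alpha> i) i) (of_nat (\<alpha> i) *s m) = mono_el \<alpha> (of_nat (\<alpha> i) *s m)" for i
    by (cases "\<alpha> i = 0") (simp_all add: incr_decr)
  have "gam_s scale f r (mono_el \<alpha> m) =
      (\<Sum>i<r. mono_el \<alpha> (of_nat (\<alpha> i) *s m)) - (\<Sum>i<r. mono_el (incr \<alpha> i) (f i *s m))"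
    by (simp add: gam_s_def fsupp_additive_diff[OF fsupp_additive_gam_dt] incr_decr_term
        sum_subtractf)
  also have "(\<Sum>i<r. mono_el \<alpha> (of_nat (\<alpha> i) *s m)) = mono_el \<alpha> (of_nat (msize r \<alpha>) *s m)"
    by (simp add: msize_def mono_el_sum scale_sum_left)
  finally show ?thesis .
qed

lemma phi_mg_theta: "phi r (mg_theta scale f r F) = gam_s scale f r (phi r F)"
proof -
  have "phi r (mg_theta scale f r F) = (\<Sum>i<r. phi r (mg_y i (mg_dy scale f i F)))"
    unfolding mg_theta_def by (rule phi_sum) (simp add: mg_y_def split: prod.split)
  also have "\<dots> = (\<Sum>i<r. - gam_dt i (gam_t scale f i (phi r F)))"
    by (simp add: phi_mg_y phi_mg_dy)
  finally show ?thesis by (simp add: gam_s_def sum_negf)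
qed

lemma phi_mg_xi_mono_el:
  assumes j: "j = int (msize r \<alpha>) - l"
  shows "phi r ((\<Sum>k<r. mono_el (incr \<alpha> k, j) (f k *s m)) - mono_el (\<alpha>, j - 1) (of_int j *s m)) =
    gam_s scale f r (phi r (mono_el (\<alpha>, j) m)) - gam_h scale (of_int l) (phi r (mono_el (\<alpha>, j) m))"
proof -
  define y where "y = alt_sign (int (msize r \<alpha>) + j) m"
  have incr: "phi r (mono_el (incr \<alpha> k, j) (f k *s m)) = - mono_el (incr \<alpha> k) (f k *s y)"
    if "k < r" for k
    using that by (simp add: y_def msize_incr alt_sign_def mono_el_minus)
  have pred: "phi r (mono_el (\<alpha>, j - 1) (of_int j *s m)) = - mono_el \<alpha> (of_int j *s y)"
    by (simp add: y_def alt_sign_def mono_el_minus)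
  have "phi r ((\<Sum>k<r. mono_el (incr \<alpha> k, j) (f k *s m)) - mono_el (\<alpha>, j - 1) (of_int j *s m)) =
      mono_el \<alpha> (of_int j *s y) - (\<Sum>k<r. mono_el (incr \<alpha> k) (f k *s y))"
    by (simp del: phi_mono_el add: phi_diff phi_sum incr pred sum_negf)
  also have "mono_el \<alpha> (of_int j *s y) =
      mono_el \<alpha> (of_nat (msize r \<alpha>) *s y) - mono_el \<alpha> (of_int l *s y)"
    by (simp add: j scale_left_diff_distrib mono_el_diff)
  also have "\<dots> - (\<Sum>k<r. mono_el (incr \<alpha> k) (f k *s y)) =
      gam_s scale f r (mono_el \<alpha> y) - gam_h scale (of_int l) (mono_el \<alpha> y)"
    by (simp add: gam_s_mono_el diff_right_commute)
  finally show ?thesis unfolding y_def phi_mono_el .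
qed

lemma phi_mg_s:
  assumes F: "F \<in> Eell r l"
  shows "phi r (mg_s scale f r F) = gam_s scale f r (phi r F) - gam_h scale (of_int l) (phi r F)"
proof -
  have "phi r (mg_s scale f r F) = phi r (mg_xi scale f r F)"
    by (simp add: mg_s_def phi_minus phi_mg_dxi)
  also have "\<dots> = gam_s scale f r (phi r F) - gam_h scale (of_int l) (phi r F)"
    unfolding mg_xi_def
  proof (rule phi_intertwine[OF fsupp_additive_diff_fun[OF fsupp_additive_gam_s
          fsupp_additive_gam_h]])
    fix a assume "a \<in> fsupp F"
    moreover obtain \<alpha> j where a: "a = (\<alpha>, j)" by (cases a)
    ultimately have j: "j = int (msize r \<alpha>) - l" using F by (auto simp: Eell_def)
    show "phi r ((\<lambda>(\<alpha>, j) m. (\<Sum>l<r. mono_el (incr \<alpha> l, j) (f l *s m)) -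
        mono_el (\<alpha>, j - 1) (of_int j *s m)) a (F a)) =
      gam_s scale f r (phi r (mono_el a (F a))) - gam_h scale (of_int l) (phi r (mono_el a (F a)))"
      unfolding a using phi_mg_xi_mono_el[OF j] by simp
  qed (simp split: prod.split)
  finally show ?thesis .
qed

end

lemma Dmod_module: "Dmod n sm dO dM \<Longrightarrow> module sm"
  by unfold_locales (simp_all add: Dmod_def)

lemma Dmod_additive_dM: "Dmod n sm dO dM \<Longrightarrow> i < n \<Longrightarrow> additive (dM i)"
  by unfold_locales (simp add: Dmod_def)

theorem proposition4p2:
  fixes n r :: nat
    and sm :: "'r::comm_ring_1 \<Rightarrow> 'm::ab_group_add \<Rightarrow> 'm"
    and dO :: "nat \<Rightarrow> 'r \<Rightarrow> 'r"
    and dM :: "nat \<Rightarrow> 'm \<Rightarrow> 'm"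
    and f :: "nat \<Rightarrow> 'r"
  assumes "Dmod n sm dO dM"
  shows
    \<comment> \<open>(1) phi is D_X-linear\<close>
    "(\<forall>F\<in>Mg r. \<forall>h. phi r (mg_h sm h F) = gam_h sm h (phi r F)) \<and>
     (\<forall>F\<in>Mg r. \<forall>i<n. phi r (mg_dx sm dO dM f r i F) = gam_dx sm dO dM f r i (phi r F)) \<and>
     \<comment> \<open>(2)\<close>
     (\<forall>k::int. \<forall>F::(nat \<Rightarrow> nat) \<times> int \<Rightarrow> 'm. F \<in> Mg r \<longrightarrow> phi r (mg_dxi_pow k F) = (if even k then phi r F else - phi r F)) \<and>
     \<comment> \<open>(3)\<close>
     (\<forall>i<r. \<forall>F::(nat \<Rightarrow> nat) \<times> int \<Rightarrow> 'm. F \<in> Mg r \<longrightarrow> phi r (mg_y i F) = - gam_dt i (phi r F)) \<and>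
     \<comment> \<open>(4)\<close>
     (\<forall>i<r. \<forall>F\<in>Mg r. phi r (mg_dy sm f i F) = gam_t sm f i (phi r F)) \<and>
     \<comment> \<open>(5)\<close>
     (\<forall>F\<in>Mg r. phi r (mg_theta sm f r F) = gam_s sm f r (phi r F)) \<and>
     \<comment> \<open>(6)\<close>
     (\<forall>l::int. bij_betw (phi r) (Eell r l) (Gam r) \<and>
        (\<forall>F\<in>Eell r l. phi r (mg_s sm f r F) =
            gam_s sm f r (phi r F) - gam_h sm (of_int l) (phi r F)))"
proof -
  interpret module sm by (rule Dmod_module[OF assms])
  have dM: "additive (dM i)" if "i < n" for i
    by (rule Dmod_additive_dM[OF assms that])
  show ?thesis
    by (simp add: phi_mg_h phi_mg_dx[OF dM] phi_mg_dxi_pow[unfolded alt_sign_def] phi_mg_y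
        phi_mg_dy phi_mg_theta bij_betw_phi_Eell phi_mg_s)
qed

end
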